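(* Let $(\mu,\nu)\in\mathcal{P}(\mathbb{T})\times\mathcal{P}(\mathbb{T})$ be $\rhd_c$-infinitely divisible. Then both $\mu$ and $\nu$ belong to $ID(\uplus\!\!\times,\mathbb{T})$. In particular, $ID(\rhd,\mathbb{T})\subset ID(\uplus\!\!\times,\mathbb{T})$.
   Context: $\mathbb{T}$ is the unit circle, $\mathbb{D}$ the open unit disc, and $\mathcal{P}(\mathbb{T})$ the Borel probability measures on $\mathbb{T}$. For $\mu\in\mathcal{P}(\mathbb{T})$ let $\psi_\mu(z)=\int\frac{z\zeta}{1-z\zeta}d\mu(\zeta)$ and $\eta_\mu=\psi_\mu/(1+\psi_\mu)$ on $\mathbb{D}$; $\eta_\mu$ determines $\mu$, and the analytic functions of this form are exactly those $\eta:\mathbb{D}\to\mathbb{C}$ with $|\eta(z)|\le|z|$. Convolutions on $\mathcal{P}(\mathbb{T})$: - Multiplicative monotone: $\eta_{\mu\rhd\nu}=\eta_\mu\circ\eta_\nu$. - Multiplicative Boolean: $\eta_{\mu\uplus\!\!\times\nu}(z)=\eta_\mu(z)\eta_\nu(z)/z$. - Multiplicative conditionally monotone, on pairs: $(\mu_1,\nu_1)\rhd_c(\mu_2,\nu_2)=(\mu,\nu)$ with $\eta_\nu=\eta_{\nu_1}\circ\eta_{\nu_2}$ and $\eta_\mu(z)=\eta_{\mu_2}(z)\,h_{\mu_1}(\eta_{\nu_2}(z))$, where $h_{\mu_1}(w)=\eta_{\mu_1}(w)/w$ and $h_{\mu_1}(0)=\eta_{\mu_1}'(0)$. For each of these operations,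 an element is infinitely divisible if for every $n\ge2$ it equals the $n$-fold convolution power of some element of $\mathcal{P}(\mathbb{T})$ (respectively of $\mathcal{P}(\mathbb{T})^2$ for $\rhd_c$). $ID(\rhd,\mathbb{T})$ and $ID(\uplus\!\!\times,\mathbb{T})$ denote the sets of $\rhd$- and $\uplus\!\!\times$-infinitely divisible probability measures on $\mathbb{T}$. *)

theory Defs
  imports "HOL-Probability.Probability"
begin

text \<open>Borel probability measures on the unit circle T, as measures on the complex plane
  concentrated on the unit circle.\<close>
definition PT :: "complex measure set" where
  "PT = {M. prob_space M \<and> sets M = sets borel \<and> emeasure M (UNIV - sphere 0 1) = 0}"

definition psi :: "complex measure \<Rightarrow> complex \<Rightarrow> complex" where
  "psi M z = (\<integral>\<zeta>. z * \<zeta> / (1 - z * \<zeta>) \<partial>M)"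

definition eta :: "complex measure \<Rightarrow> complex \<Rightarrow> complex" where
  "eta M z = psi M z / (1 + psi M z)"

definition hfun :: "(complex \<Rightarrow> complex) \<Rightarrow> complex \<Rightarrow> complex" where
  "hfun f w = (if w = 0 then deriv f 0 else f w / w)"

text \<open>Conditionally monotone convolution on pairs (eta_mu, eta_nu) of eta-transforms:
  (mu1,nu1) |>c (mu2,nu2) = (mu,nu) with eta_nu = eta_nu1 o eta_nu2 and
  eta_mu(z) = eta_mu2(z) * h_mu1(eta_nu2(z)).\<close>
definition cm_step ::
  "(complex \<Rightarrow> complex) \<times> (complex \<Rightarrow> complex) \<Rightarrow> (complex \<Rightarrow> complex) \<times> (complex \<Rightarrow> complex)
     \<Rightarrow> (complex \<Rightarrow> complex) \<times> (complex \<Rightarrow> complex)" where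
  "cm_step p q = ((\<lambda>z. fst q z * hfun (fst p) (snd q z)), snd p \<circ> snd q)"

fun cm_pow :: "(complex \<Rightarrow> complex) \<Rightarrow> (complex \<Rightarrow> complex) \<Rightarrow> nat
     \<Rightarrow> (complex \<Rightarrow> complex) \<times> (complex \<Rightarrow> complex)" where
  "cm_pow f g 0 = ((\<lambda>z. z), (\<lambda>z. z))"
| "cm_pow f g (Suc n) = cm_step (f, g) (cm_pow f g n)"

text \<open>Infinite divisibility; equality of measures is expressed through equality of their
  eta-transforms on the unit disc (eta determines the measure).\<close>
definition ID_cm :: "complex measure \<Rightarrow> complex measure \<Rightarrow> bool" where
  "ID_cm \<mu> \<nu> \<longleftrightarrow> (\<forall>n\<ge>2. \<exists>\<mu>1 \<in> PT. \<exists>\<nu>1 \<in> PT. \<forall>z \<in> ball 0 1.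
      eta \<mu> z = fst (cm_pow (eta \<mu>1) (eta \<nu>1) n) z \<and> eta \<nu> z = snd (cm_pow (eta \<mu>1) (eta \<nu>1) n) z)"

definition ID_boolean :: "complex measure set" where
  "ID_boolean = {\<mu> \<in> PT. \<forall>n\<ge>2. \<exists>\<rho> \<in> PT. \<forall>z \<in> ball 0 1.
      eta \<mu> z = eta \<rho> z ^ n / z ^ (n - 1)}"

definition ID_monotone :: "complex measure set" where
  "ID_monotone = {\<mu> \<in> PT. \<forall>n\<ge>2. \<exists>\<rho> \<in> PT. \<forall>z \<in> ball 0 1.
      eta \<mu> z = (eta \<rho> ^^ n) z}"

end

theory Submission
  imports Defs "HOL-Complex_Analysis.Complex_Analysis"
begin

text \<open>Write \<open>\<eta>\<^sub>\<mu>(z) = z h\<^sub>\<mu>(z)\<close>. If \<open>(\<mu>\<^sub>1, \<nu>\<^sub>1)\<close> is an \<open>n\<close>-th \<open>\<rhd>\<^sub>c\<close>-root of \<open>(\<mu>, \<nu>)\<close>, then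
  \<open>h\<^sub>\<mu> = \<Prod>\<^sub>k\<^sub><\<^sub>n h\<^sub>\<mu>\<^sub>1 \<circ> \<eta>\<^sub>\<nu>\<^sub>1\<^sup>k\<close>: a product of \<open>n\<close> functions bounded by \<open>1\<close>, composed with
  contractions of the disc fixing \<open>0\<close>. By Schwarz's lemma, \<open>h\<^sub>\<mu>(0) = 0\<close> forces
  \<open>|h\<^sub>\<mu>(z)| \<le> |z|\<^sup>n\<close>, and a zero of \<open>h\<^sub>\<mu>\<close> at \<open>z\<close> forces \<open>|h\<^sub>\<mu>(0)| = |h\<^sub>\<mu>\<^sub>1(0)|\<^sup>n \<le> |z|\<^sup>n\<close>;
  as \<open>n\<close> is arbitrary, \<open>h\<^sub>\<mu>\<close> is either identically zero or zero-free. In the first case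
  \<open>\<eta>\<^sub>\<mu> = 0\<close> is its own Boolean root. In the second, \<open>h\<^sub>\<mu>\<close> has a holomorphic \<open>n\<close>-th root \<open>K\<close>,
  and \<open>z K(z)\<close> is a self-map of the disc fixing \<open>0\<close>, hence by the Herglotz representation the
  \<open>\<eta>\<close>-transform of some \<open>\<rho>\<close>, and \<open>\<eta>\<^sub>\<mu> = \<eta>\<^sub>\<rho>\<^sup>n / z\<^sup>n\<^sup>-\<^sup>1\<close>. For \<open>\<nu>\<close>, note that it is \<open>\<rhd>\<close>-infinitely
  divisible and that \<open>\<rhd>\<^sub>c\<close> restricted to pairs \<open>(\<nu>, \<nu>)\<close> is \<open>\<rhd>\<close>.\<close>

section \<open>Schwarz-type estimates on the unit disc\<close>

lemma Schwarz_Lemma_le: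
  assumes holf: "f holomorphic_on ball 0 1" and f0: "f 0 = 0"
    and le1: "\<And>z. norm z < 1 \<Longrightarrow> norm (f z) \<le> 1" and \<xi>: "norm \<xi> < 1"
  shows "norm (f \<xi>) \<le> norm \<xi>"
proof (rule field_le_epsilon)
  fix e :: real assume e: "e > 0"
  define g where "g z = f z / of_real (1 + e)" for z
  have norm_g: "norm (g z) = norm (f z) / (1 + e)" for z
    unfolding g_def norm_divide norm_of_real using e by simp
  have "g holomorphic_on ball 0 1" unfolding g_def using holf e
    by (intro holomorphic_intros) auto
  moreover have "norm (g z) < 1" if "norm z < 1" for z
    using le1[OF that] e by (simp add: norm_g divide_less_eq)
  ultimately have "norm (g \<xi>) \<le> norm \<xi>"
    using Schwarz_Lemma(1)[of g \<xi>] \<xi> by (simp add: g_def f0)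
  then have "norm (f \<xi>) \<le> (1 + e) * norm \<xi>"
    using e by (simp add: norm_g divide_le_eq mult.commute)
  also have "\<dots> \<le> norm \<xi> + e" using \<xi> e by (simp add: algebra_simps)
  finally show "norm (f \<xi>) \<le> norm \<xi> + e" .
qed

lemma norm_at_0_le_norm_of_zero:
  assumes holh: "h holomorphic_on ball 0 1"
    and le1: "\<And>z. norm z < 1 \<Longrightarrow> norm (h z) \<le> 1"
    and w: "norm w < 1" and hw: "h w = 0"
  shows "norm (h 0) \<le> norm w"
proof -
  define B where "B = Moebius_function 0 (- w)"
  have B_in: "norm (B z) < 1" if "norm z < 1" for z
    using Moebius_function_norm_lt_1[of "-w" z 0] w that by (simp add: B_def)
  have "(h \<circ> B) holomorphic_on ball 0 1"
    by (rule holomorphic_on_compose_gen[OF _ holh])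
      (use B_in w in \<open>auto simp: B_def intro: Moebius_function_holomorphic\<close>)
  moreover have "(h \<circ> B) 0 = 0"
    using hw by (simp add: B_def Moebius_function_of_zero)
  ultimately have "norm ((h \<circ> B) (- w)) \<le> norm (- w)"
    by (rule Schwarz_Lemma_le) (use B_in le1 w in auto)
  then show ?thesis by (simp add: B_def Moebius_function_eq_zero)
qed

lemma hfun_mult_eq: "f 0 = 0 \<Longrightarrow> f z = z * hfun f z"
  by (cases "z = 0") (auto simp: hfun_def)

lemma holomorphic_on_hfun:
  assumes holf: "f holomorphic_on ball 0 1" and f0: "f 0 = 0"
  shows "hfun f holomorphic_on ball 0 1"
proof -
  obtain h where h: "h holomorphic_on ball 0 1" "\<And>z. norm z < 1 \<Longrightarrow> f z = z * h z" "deriv f 0 = h 0"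
    using Schwarz3[OF holf f0] by blast
  have "hfun f z = h z" if "z \<in> ball 0 1" for z
    using that h by (cases "z = 0") (auto simp: hfun_def)
  then show ?thesis using h(1) holomorphic_transform by metis
qed

lemma norm_hfun_le_1:
  assumes holf: "f holomorphic_on ball 0 1" and f0: "f 0 = 0"
    and lt1: "\<And>z. norm z < 1 \<Longrightarrow> norm (f z) < 1" and z: "norm z < 1"
  shows "norm (hfun f z) \<le> 1"
proof (cases "z = 0")
  case True
  then show ?thesis using Schwarz_Lemma(2)[OF holf f0 lt1 z] by (simp add: hfun_def)
next
  case False
  then show ?thesis using Schwarz_Lemma(1)[OF holf f0 lt1 z]
    by (simp add: hfun_def norm_divide divide_le_eq)
qed

lemma holomorphic_nth_root_ball:
  assumes holH: "H holomorphic_on ball 0 1" and nz: "\<And>z. norm z < 1 \<Longrightarrow> H z \<noteq> 0" and n: "n > 0"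
  obtains K where "K holomorphic_on ball 0 1" "\<And>z. norm z < 1 \<Longrightarrow> K z ^ n = H z"
proof -
  obtain g where g: "g holomorphic_on ball 0 1" "\<And>z. z \<in> ball 0 1 \<Longrightarrow> H z = exp (g z)"
    using contractible_imp_holomorphic_log[OF holH convex_imp_contractible[OF convex_ball]] nz
    by (metis mem_ball_0)
  define K where "K z = exp (g z / of_nat n)" for z
  have "K z ^ n = H z" if "norm z < 1" for z
  proof -
    have "K z ^ n = exp (of_nat n * (g z / of_nat n))" unfolding K_def by (rule exp_of_nat_mult[symmetric])
    then show ?thesis using g(2) that n by simp
  qed
  moreover have "K holomorphic_on ball 0 1" unfolding K_def using g(1) by (intro holomorphic_intros) auto
  ultimately show ?thesis using that by blast
qed

section \<open>The \<open>\<eta>\<close>-transform of a probability measure on the circle\<close>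

lemma PT_D:
  assumes "M \<in> PT"
  shows "prob_space M" "sets M = sets borel" "AE \<zeta> in M. norm \<zeta> = 1"
proof -
  show "prob_space M" and s: "sets M = sets borel" using assms by (auto simp: PT_def)
  then have sp: "space M = UNIV" using sets_eq_imp_space_eq by fastforce
  have "UNIV - sphere (0::complex) 1 \<in> null_sets M"
    using assms unfolding s by (auto simp: PT_def s)
  then show "AE \<zeta> in M. norm \<zeta> = 1"
    by (rule AE_I') (auto simp: sp)
qed

lemma PT_bounded_integral:
  fixes f :: "complex \<Rightarrow> complex"
  assumes M: "M \<in> PT" and f: "f \<in> borel_measurable borel"
    and bound: "\<And>\<zeta>. norm \<zeta> = 1 \<Longrightarrow> norm (f \<zeta>) \<le> c"
  shows "integrable M f" "norm (integral\<^sup>L M f) \<le> c"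
proof -
  interpret prob_space M using PT_D(1)[OF M] .
  have fM: "f \<in> borel_measurable M" using f PT_D(2)[OF M] measurable_cong_sets by blast
  have AE: "AE \<zeta> in M. norm (f \<zeta>) \<le> c" using PT_D(3)[OF M] by eventually_elim (rule bound)
  show i: "integrable M f" using integrable_const_bound[OF AE fM] .
  have "norm (integral\<^sup>L M f) \<le> (\<integral>\<zeta>. norm (f \<zeta>) \<partial>M)" by simp
  also have "\<dots> \<le> c" using AE i by (intro integral_le_const) auto
  finally show "norm (integral\<^sup>L M f) \<le> c" .
qed

lemma norm_one_minus_mult_ge:
  fixes z \<zeta> :: complex assumes "norm \<zeta> = 1"
  shows "1 - norm z \<le> norm (1 - z * \<zeta>)"
  using norm_triangle_ineq2[of 1 "z * \<zeta>"] assms by (simp add: norm_mult)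

lemma mult_ne_one_disc_circle:
  fixes z \<zeta> :: complex assumes "norm z < 1" "norm \<zeta> = 1"
  shows "z * \<zeta> \<noteq> 1"
proof
  assume "z * \<zeta> = 1"
  then have "norm z * norm \<zeta> = 1" by (metis norm_mult norm_one)
  with assms show False by simp
qed

lemma norm_geometric_tail_le:
  fixes z \<zeta> :: complex assumes z: "norm z < 1" and \<zeta>: "norm \<zeta> = 1"
  shows "norm ((z * \<zeta>) ^ N / (1 - z * \<zeta>)) \<le> norm z ^ N / (1 - norm z)"
  unfolding norm_divide norm_power norm_mult \<zeta> mult_1_right
  using norm_one_minus_mult_ge[OF \<zeta>, of z] z
  by (intro divide_left_mono mult_pos_pos) auto

lemma geometric_tail:
  fixes w :: complex assumes "w \<noteq> 1"
  shows "1 / (1 - w) - (\<Sum>k<N. w ^ k) = w ^ N / (1 - w)"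
  using assms by (simp add: sum_gp_strict field_simps)

definition mgf :: "complex measure \<Rightarrow> complex \<Rightarrow> complex" where
  "mgf M z = (\<integral>\<zeta>. 1 / (1 - z * \<zeta>) \<partial>M)"

lemma integrable_mgf:
  assumes "M \<in> PT" "norm z < 1"
  shows "integrable M (\<lambda>\<zeta>. 1 / (1 - z * \<zeta>))"
  using norm_geometric_tail_le[of z _ 0] assms
  by (intro PT_bounded_integral(1)[where c = "1 / (1 - norm z)"]) auto

lemma psi_eq_mgf:
  assumes M: "M \<in> PT" and z: "norm z < 1"
  shows "psi M z = mgf M z - 1"
proof -
  interpret prob_space M using PT_D(1)[OF M] .
  have "AE \<zeta> in M. z * \<zeta> / (1 - z * \<zeta>) = 1 / (1 - z * \<zeta>) - 1"
    using PT_D(3)[OF M] by eventually_elim (use mult_ne_one_disc_circle[OF z] in \<open>auto simp: field_simps\<close>)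
  then have "psi M z = (\<integral>\<zeta>. 1 / (1 - z * \<zeta>) - 1 \<partial>M)"
    unfolding psi_def using PT_D(2)[OF M] by (intro integral_cong_AE) auto
  also have "\<dots> = mgf M z - 1" unfolding mgf_def using integrable_mgf[OF M z] by (simp add: prob_space)
  finally show ?thesis .
qed

lemma mgf_sums:
  assumes M: "M \<in> PT" and z: "norm z < 1"
  shows "(\<lambda>k. (\<integral>\<zeta>. \<zeta> ^ k \<partial>M) * z ^ k) sums mgf M z"
proof -
  have int_pow: "integrable M (\<lambda>\<zeta>. (z * \<zeta>) ^ k)" for k
  proof (rule PT_bounded_integral(1)[OF M, where c = 1])
    fix \<zeta> :: complex assume "norm \<zeta> = 1"
    then show "norm ((z * \<zeta>) ^ k) \<le> 1" using z by (simp add: norm_power norm_mult power_le_one)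
  qed measurable
  have partial_sum: "(\<Sum>k<N. (\<integral>\<zeta>. \<zeta> ^ k \<partial>M) * z ^ k) = (\<integral>\<zeta>. (\<Sum>k<N. (z * \<zeta>) ^ k) \<partial>M)" for N
    using int_pow by (simp add: power_mult_distrib mult.commute del: power_mult)
  have tail: "norm (mgf M z - (\<Sum>k<N. (\<integral>\<zeta>. \<zeta> ^ k \<partial>M) * z ^ k)) \<le> norm z ^ N / (1 - norm z)" for N
  proof -
    have "mgf M z - (\<Sum>k<N. (\<integral>\<zeta>. \<zeta> ^ k \<partial>M) * z ^ k) = (\<integral>\<zeta>. 1 / (1 - z * \<zeta>) - (\<Sum>k<N. (z * \<zeta>) ^ k) \<partial>M)"
      unfolding partial_sum mgf_def
      by (rule Bochner_Integration.integral_diff[symmetric, OF integrable_mgf[OF M z]])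
        (intro Bochner_Integration.integrable_sum int_pow)
    also have "norm \<dots> \<le> norm z ^ N / (1 - norm z)"
    proof (rule PT_bounded_integral(2)[OF M])
      fix \<zeta> :: complex assume \<zeta>: "norm \<zeta> = 1"
      have "1 / (1 - z * \<zeta>) - (\<Sum>k<N. (z * \<zeta>) ^ k) = (z * \<zeta>) ^ N / (1 - z * \<zeta>)"
        using mult_ne_one_disc_circle[OF z \<zeta>] by (rule geometric_tail)
      then show "norm (1 / (1 - z * \<zeta>) - (\<Sum>k<N. (z * \<zeta>) ^ k)) \<le> norm z ^ N / (1 - norm z)"
        using norm_geometric_tail_le[OF z \<zeta>] by simp
    qed measurable
    finally show ?thesis .
  qed
  have "(\<lambda>N. norm z ^ N / (1 - norm z)) \<longlonglongrightarrow> 0"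
    using z by (intro tendsto_divide_zero LIMSEQ_power_zero) auto
  then have "(\<lambda>N. mgf M z - (\<Sum>k<N. (\<integral>\<zeta>. \<zeta> ^ k \<partial>M) * z ^ k)) \<longlonglongrightarrow> 0"
    by (rule Lim_null_comparison[rotated]) (use tail in simp)
  from tendsto_diff[OF tendsto_const this, of "mgf M z"] show ?thesis
    unfolding sums_def by simp
qed

lemma holomorphic_on_mgf: "M \<in> PT \<Longrightarrow> mgf M holomorphic_on ball 0 1"
  by (rule power_series_holomorphic[where a = "\<lambda>k. (\<integral>\<zeta>. \<zeta> ^ k \<partial>M)"]) (use mgf_sums in auto)

lemma Re_inverse_one_minus_ge:
  fixes w :: complex assumes "norm w < 1"
  shows "Re (1 / (1 - w)) \<ge> 1 / (1 + norm w)"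
proof -
  define a b r where "a = Re w" and "b = Im w" and "r = norm w"
  have r2: "r\<^sup>2 = a\<^sup>2 + b\<^sup>2" unfolding r_def a_def b_def by (simp add: cmod_power2)
  have ar: "\<bar>a\<bar> \<le> r" unfolding r_def a_def by (rule abs_Re_le_cmod)
  have r: "0 \<le> r" "r < 1" using assms by (auto simp: r_def)
  have a1: "a < 1" using ar r by linarith
  have "Re (1 / (1 - w)) = (1 - a) / ((1 - a)\<^sup>2 + b\<^sup>2)"
    by (simp add: Re_divide a_def b_def cmod_power2 power2_eq_square)
  moreover have "(1 - a)\<^sup>2 + b\<^sup>2 \<le> (1 - a) * (1 + r)"
  proof -
    have "(1 - a) * (1 + r) - ((1 - a)\<^sup>2 + b\<^sup>2) = (r + a) * (1 - r)"
      using r2 by (simp add: algebra_simps power2_eq_square)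
    moreover have "(r + a) * (1 - r) \<ge> 0" using ar r by simp
    ultimately show ?thesis by linarith
  qed
  then have "(1 - a) / ((1 - a) * (1 + r)) \<le> (1 - a) / ((1 - a)\<^sup>2 + b\<^sup>2)"
    using a1 r by (intro divide_left_mono) (auto intro!: mult_pos_pos add_pos_nonneg)
  ultimately show ?thesis using a1 by (simp add: r_def)
qed

lemma Re_inverse_one_minus_gt_half:
  fixes w :: complex assumes "norm w < 1"
  shows "Re (1 / (1 - w)) > 1 / 2"
proof -
  have "1 / 2 < 1 / (1 + norm w)" using assms by (simp add: field_simps add_pos_nonneg)
  then show ?thesis using Re_inverse_one_minus_ge[OF assms] by linarith
qed

lemma Re_psi_gt:
  assumes M: "M \<in> PT" and z: "norm z < 1"
  shows "Re (psi M z) > - 1 / 2"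
proof -
  interpret prob_space M using PT_D(1)[OF M] .
  have "Re (mgf M z) = (\<integral>\<zeta>. Re (1 / (1 - z * \<zeta>)) \<partial>M)"
    unfolding mgf_def using integrable_mgf[OF M z] by (rule integral_Re[symmetric])
  also have "\<dots> \<ge> 1 / (1 + norm z)"
  proof (rule integral_ge_const)
    show "integrable M (\<lambda>\<zeta>. Re (1 / (1 - z * \<zeta>)))" using integrable_mgf[OF M z] by (rule integrable_Re)
    show "AE \<zeta> in M. 1 / (1 + norm z) \<le> Re (1 / (1 - z * \<zeta>))"
      using PT_D(3)[OF M]
    proof eventually_elim
      case (elim \<zeta>)
      then have "norm (z * \<zeta>) < 1" using z by (simp add: norm_mult)
      then show ?case using Re_inverse_one_minus_ge[of "z * \<zeta>"] elim by (simp add: norm_mult)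
    qed
  qed
  finally have "Re (mgf M z) \<ge> 1 / (1 + norm z)" .
  moreover have "1 / 2 < 1 / (1 + norm z)" using z by (simp add: field_simps add_pos_nonneg)
  ultimately show ?thesis using psi_eq_mgf[OF M z] by simp
qed

lemma eta_0 [simp]: "eta M 0 = 0"
  by (simp add: eta_def psi_def)

lemma one_plus_psi_nonzero:
  assumes "M \<in> PT" "norm z < 1"
  shows "1 + psi M z \<noteq> 0"
proof
  assume "1 + psi M z = 0"
  then have "Re (psi M z) = - 1" by (simp add: complex_eq_iff)
  then show False using Re_psi_gt[OF assms] by simp
qed

lemma holomorphic_on_eta:
  assumes M: "M \<in> PT"
  shows "eta M holomorphic_on ball 0 1"
proof -
  have "(\<lambda>z. mgf M z - 1) holomorphic_on ball 0 1" using holomorphic_on_mgf[OF M] by (intro holomorphic_intros)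
  then have "psi M holomorphic_on ball 0 1" by (rule holomorphic_transform) (auto simp: psi_eq_mgf[OF M])
  then have "(\<lambda>z. psi M z / (1 + psi M z)) holomorphic_on ball 0 1"
    using one_plus_psi_nonzero[OF M] by (intro holomorphic_intros) auto
  then show ?thesis unfolding eta_def[abs_def] .
qed

lemma norm_eta_lt_1:
  assumes M: "M \<in> PT" and z: "norm z < 1"
  shows "norm (eta M z) < 1"
proof -
  let ?p = "psi M z"
  have "(norm ?p)\<^sup>2 < (norm (1 + ?p))\<^sup>2"
    using Re_psi_gt[OF M z] by (simp only: cmod_power2) (simp add: power2_eq_square algebra_simps)
  then have "norm ?p < norm (1 + ?p)" using power2_less_imp_less by fastforce
  then show ?thesis using one_plus_psi_nonzero[OF M z] by (simp add: eta_def norm_divide divide_less_eq)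
qed

lemma norm_eta_le:
  assumes "M \<in> PT" "norm z < 1"
  shows "norm (eta M z) \<le> norm z"
  using Schwarz_Lemma(1)[OF holomorphic_on_eta eta_0 norm_eta_lt_1] assms by blast

lemma holomorphic_on_hfun_eta: "M \<in> PT \<Longrightarrow> hfun (eta M) holomorphic_on ball 0 1"
  by (rule holomorphic_on_hfun[OF holomorphic_on_eta eta_0])

lemma norm_hfun_eta_le_1: "M \<in> PT \<Longrightarrow> norm z < 1 \<Longrightarrow> norm (hfun (eta M) z) \<le> 1"
  by (rule norm_hfun_le_1[OF holomorphic_on_eta eta_0 norm_eta_lt_1])


section \<open>Every self-map of the disc fixing \<open>0\<close> is an \<open>\<eta>\<close>-transform\<close>

definition ucirc :: "real \<Rightarrow> complex" where
  "ucirc = circlepath 0 1"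

lemma ucirc_eq: "ucirc t = exp (2 * of_real pi * \<i> * of_real t)"
  by (simp add: ucirc_def circlepath)

lemma norm_ucirc [simp]: "norm (ucirc t) = 1"
  by (simp add: ucirc_eq norm_exp_eq_Re)

lemma ucirc_nonzero [simp]: "ucirc t \<noteq> 0"
  using norm_ucirc[of t] by (metis norm_zero zero_neq_one)

lemma ucirc_minus_nonzero: "norm z < 1 \<Longrightarrow> ucirc t - z \<noteq> 0"
  using norm_ucirc[of t] by auto

lemma cnj_ucirc: "cnj (ucirc t) = 1 / ucirc t"
  using complex_norm_square[of "ucirc t"] by (simp add: field_simps)

lemma continuous_on_ucirc: "continuous_on UNIV ucirc"
  unfolding ucirc_eq by (intro continuous_intros)

lemma has_integral_Cauchy_ucirc:
  assumes G: "G holomorphic_on ball 0 R" and R: "1 < R" and z: "norm z < 1"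
  shows "((\<lambda>t. G (ucirc t) * (ucirc t / (ucirc t - z))) has_integral G z) {0..1}"
proof -
  have "G holomorphic_on cball 0 1" by (rule holomorphic_on_subset[OF G]) (use R in auto)
  then have "((\<lambda>u. G u / (u - z)) has_contour_integral (2 * of_real pi * \<i> * G z)) (circlepath 0 1)"
    using Cauchy_integral_circlepath_simple[of G 0 1 z] z by simp
  then have "((\<lambda>t. G (ucirc t) / (ucirc t - z) * vector_derivative (circlepath 0 1) (at t within {0..1}))
     has_integral (2 * of_real pi * \<i> * G z)) {0..1}"
    unfolding has_contour_integral_def ucirc_def .
  then have "((\<lambda>t. (2 * of_real pi * \<i>) * (G (ucirc t) * (ucirc t / (ucirc t - z))))
      has_integral (2 * of_real pi * \<i> * G z)) {0..1}"
    by (rule has_integral_cong[THEN iffD1, rotated]) (auto simp: vector_derivative_circlepath01 ucirc_eq)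
  then show ?thesis
    by (subst (asm) has_integral_mult_right_iff) auto
qed

lemma has_integral_mean_value_ucirc:
  assumes "G holomorphic_on ball 0 R" "1 < R"
  shows "((\<lambda>t. G (ucirc t)) has_integral G 0) {0..1}"
  using has_integral_Cauchy_ucirc[OF assms, of 0] by simp

text \<open>On the circle \<open>cnj \<zeta> = 1/\<zeta>\<close>, so the conjugate of this integrand is the boundary value of a
  function holomorphic near the closed disc that vanishes at \<open>0\<close>.\<close>
lemma has_integral_cnj_ucirc_kernel:
  assumes G: "G holomorphic_on ball 0 R" and R: "1 < R" and z: "norm z < 1"
  shows "((\<lambda>t. cnj (G (ucirc t)) * (z / (ucirc t - z))) has_integral 0) {0..1}"
proof -
  define R' where "R' = min R (2 / (1 + norm z))"
  have pz: "0 < 1 + norm z" by (simp add: add_pos_nonneg)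
  have R'1: "1 < R'" using R z pz by (auto simp: R'_def field_simps)
  have small: "norm (cnj z * w) < 1" if "w \<in> ball 0 R'" for w
  proof -
    have "norm z * norm w \<le> norm z * (2 / (1 + norm z))"
      using that by (intro mult_left_mono) (auto simp: R'_def)
    also have "\<dots> < 1" using z pz by (simp add: field_simps)
    finally show ?thesis by (simp add: norm_mult)
  qed
  define H where "H w = G w * (cnj z * w / (1 - cnj z * w))" for w
  have "H holomorphic_on ball 0 R'"
    unfolding H_def
  proof (intro holomorphic_intros)
    show "G holomorphic_on ball 0 R'" by (rule holomorphic_on_subset[OF G]) (auto simp: R'_def)
    show "1 - cnj z * w \<noteq> 0" if "w \<in> ball 0 R'" for w
      using small[OF that] by auto
  qed
  from has_integral_mean_value_ucirc[OF this R'1]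
  have "((\<lambda>t. H (ucirc t)) has_integral 0) {0..1}" by (simp add: H_def)
  then have "((cnj \<circ> (\<lambda>t. H (ucirc t))) has_integral cnj 0) {0..1}"
    by (subst has_integral_cnj)
  then have "((cnj \<circ> (\<lambda>t. H (ucirc t))) has_integral 0) {0..1}" by simp
  then show ?thesis
    by (rule has_integral_cong[THEN iffD1, rotated])
      (use ucirc_minus_nonzero[OF z] in \<open>simp add: H_def cnj_ucirc field_simps\<close>)
qed

lemma has_integral_Re_ucirc_kernel:
  assumes G: "G holomorphic_on ball 0 R" and R: "1 < R" and z: "norm z < 1"
  shows "((\<lambda>t. Re (G (ucirc t)) *\<^sub>R (z / (ucirc t - z))) has_integral (G z - G 0) / 2) {0..1}"
proof -
  have "((\<lambda>t. G (ucirc t) * (ucirc t / (ucirc t - z)) - G (ucirc t)) has_integral (G z - G 0)) {0..1}"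
    by (rule has_integral_diff[OF has_integral_Cauchy_ucirc[OF G R z] has_integral_mean_value_ucirc[OF G R]])
  then have "((\<lambda>t. G (ucirc t) * (z / (ucirc t - z))) has_integral (G z - G 0)) {0..1}"
    by (rule has_integral_cong[THEN iffD1, rotated]) (use ucirc_minus_nonzero[OF z] in \<open>auto simp: field_simps\<close>)
  from has_integral_divide[OF has_integral_add[OF this has_integral_cnj_ucirc_kernel[OF G R z]], of 2]
  have "((\<lambda>t. (G (ucirc t) * (z / (ucirc t - z)) + cnj (G (ucirc t)) * (z / (ucirc t - z))) / 2)
      has_integral (G z - G 0) / 2) {0..1}"
    by (simp only: add_0_right)
  moreover have "(g * k + cnj g * k) / 2 = Re g *\<^sub>R k" for g k :: complex
    by (simp only: distrib_right[symmetric] complex_add_cnj) (simp add: scaleR_conv_of_real)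
  ultimately show ?thesis by (simp only:)
qed

lemma lborel_integral_indicator_Icc:
  fixes f :: "real \<Rightarrow> 'a::euclidean_space"
  assumes "continuous_on {a..b} f" "(f has_integral I) {a..b}"
  shows "integral\<^sup>L lborel (\<lambda>t. indicator {a..b} t *\<^sub>R f t) = I"
  using set_borel_integral_eq_integral(2)[OF borel_integrable_atLeastAtMost'[OF assms(1)]] assms(2)
  by (simp add: set_lebesgue_integral_def integral_unique)

definition herglotz_measure :: "(complex \<Rightarrow> complex) \<Rightarrow> real measure" where
  "herglotz_measure G = density lborel (\<lambda>t. ennreal (indicator {0..1} t * Re (G (ucirc t))))"

context
  fixes G :: "complex \<Rightarrow> complex" and R :: real
  assumes holG: "G holomorphic_on ball 0 R" and R: "1 < R" and G0: "G 0 = 1"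
    and Re_G: "\<And>t. Re (G (ucirc t)) \<ge> 0"
begin

private lemma continuous_on_G_ucirc: "continuous_on UNIV (\<lambda>t. G (ucirc t))"
  by (rule continuous_on_compose2[OF holomorphic_on_imp_continuous_on[OF holG] continuous_on_ucirc])
    (use R in auto)

private lemma herglotz_density_measurable:
  "(\<lambda>t. indicator {0..1} t * Re (G (ucirc t))) \<in> borel_measurable borel"
  using continuous_on_G_ucirc
  by (intro borel_measurable_times[OF borel_measurable_indicator] borel_measurable_continuous_onI
      continuous_on_Re) auto

lemma emeasure_herglotz_measure:
  assumes "{0..1} \<subseteq> A" "A \<in> sets borel"
  shows "emeasure (herglotz_measure G) A = 1"
proof -
  have cont: "continuous_on {0..1} (\<lambda>t. Re (G (ucirc t)))"
    using continuous_on_G_ucirc by (intro continuous_on_Re) (auto intro: continuous_on_subset)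
  have int: "integrable lborel (\<lambda>t. indicator {0..1} t *\<^sub>R Re (G (ucirc t)))"
    by (rule borel_integrable_compact[OF compact_Icc cont])
  have "emeasure (herglotz_measure G) A = (\<integral>\<^sup>+t. ennreal (indicator {0..1} t * Re (G (ucirc t))) * indicator A t \<partial>lborel)"
    unfolding herglotz_measure_def
    by (rule emeasure_density) (use herglotz_density_measurable assms(2) in auto)
  also have "\<dots> = (\<integral>\<^sup>+t. ennreal (indicator {0..1} t *\<^sub>R Re (G (ucirc t))) \<partial>lborel)"
    using assms(1) by (intro nn_integral_cong) (auto simp: indicator_def)
  also have "\<dots> = ennreal (integral\<^sup>L lborel (\<lambda>t. indicator {0..1} t *\<^sub>R Re (G (ucirc t))))"
    using int Re_G by (intro nn_integral_eq_integral) auto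
  also have "\<dots> = 1"
    using lborel_integral_indicator_Icc[OF cont has_integral_Re[OF has_integral_mean_value_ucirc[OF holG R]]]
    by (simp add: G0)
  finally show ?thesis .
qed

lemma real_distribution_herglotz_measure: "real_distribution (herglotz_measure G)"
proof -
  have "prob_space (herglotz_measure G)"
    by (rule prob_spaceI) (use emeasure_herglotz_measure[of UNIV] in \<open>simp add: herglotz_measure_def\<close>)
  then show ?thesis
    by (simp add: real_distribution_def real_distribution_axioms_def herglotz_measure_def)
qed

lemma integral_herglotz_measure_kernel:
  assumes z: "norm z < 1"
  shows "integral\<^sup>L (herglotz_measure G) (\<lambda>t. z / (ucirc t - z)) = (G z - 1) / 2"
proof -
  have cont_k: "continuous_on UNIV (\<lambda>t. z / (ucirc t - z))"
    using ucirc_minus_nonzero[OF z] by (intro continuous_intros continuous_on_ucirc) auto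
  have "integral\<^sup>L (herglotz_measure G) (\<lambda>t. z / (ucirc t - z))
      = integral\<^sup>L lborel (\<lambda>t. indicator {0..1} t *\<^sub>R (Re (G (ucirc t)) *\<^sub>R (z / (ucirc t - z))))"
    unfolding herglotz_measure_def
    using herglotz_density_measurable Re_G cont_k
    by (subst integral_density) (auto intro: borel_measurable_continuous_onI simp: indicator_def)
  also have "\<dots> = (G z - 1) / 2"
  proof (rule lborel_integral_indicator_Icc)
    show "continuous_on {0..1} (\<lambda>t. Re (G (ucirc t)) *\<^sub>R (z / (ucirc t - z)))"
      using continuous_on_G_ucirc cont_k
      by (intro continuous_on_scaleR continuous_on_Re) (auto intro: continuous_on_subset)
    show "((\<lambda>t. Re (G (ucirc t)) *\<^sub>R (z / (ucirc t - z))) has_integral (G z - 1) / 2) {0..1}"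
      using has_integral_Re_ucirc_kernel[OF holG R z] by (simp add: G0)
  qed
  finally show ?thesis .
qed

end

lemma measurable_cnj_ucirc:
  assumes "real_distribution M"
  shows "(\<lambda>t. cnj (ucirc t)) \<in> measurable M borel"
proof -
  have "(\<lambda>t. cnj (ucirc t)) \<in> borel_measurable borel"
    by (intro borel_measurable_continuous_onI continuous_on_cnj continuous_on_ucirc)
  then show ?thesis using real_distribution.events_eq_borel[OF assms] measurable_cong_sets by blast
qed

lemma distr_cnj_ucirc_PT:
  assumes M: "real_distribution M"
  shows "distr M borel (\<lambda>t. cnj (ucirc t)) \<in> PT"
proof -
  interpret real_distribution M by fact
  note meas = measurable_cnj_ucirc[OF M]
  have "emeasure (distr M borel (\<lambda>t. cnj (ucirc t))) (UNIV - sphere 0 1)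
      = emeasure M ((\<lambda>t. cnj (ucirc t)) -` (UNIV - sphere 0 1) \<inter> space M)"
    by (rule emeasure_distr[OF meas]) auto
  also have "(\<lambda>t. cnj (ucirc t)) -` (UNIV - sphere 0 1) \<inter> space M = {}" by auto
  finally show ?thesis
    unfolding PT_def using prob_space_distr[OF meas] by simp
qed

lemma psi_distr_cnj_ucirc:
  assumes M: "real_distribution M" and z: "norm z < 1"
  shows "psi (distr M borel (\<lambda>t. cnj (ucirc t))) z = integral\<^sup>L M (\<lambda>t. z / (ucirc t - z))"
proof -
  interpret real_distribution M by fact
  note meas = measurable_cnj_ucirc[OF M]
  have "psi (distr M borel (\<lambda>t. cnj (ucirc t))) z = integral\<^sup>L M (\<lambda>t. z * cnj (ucirc t) / (1 - z * cnj (ucirc t)))"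
    unfolding psi_def by (rule integral_distr[OF meas]) measurable
  also have "\<dots> = integral\<^sup>L M (\<lambda>t. z / (ucirc t - z))"
    using ucirc_minus_nonzero[OF z] by (simp add: cnj_ucirc field_simps)
  finally show ?thesis .
qed

lemma tight_if_measure_Ioc_eq_1:
  assumes "\<And>n. real_distribution (\<mu> n)" "a < b" "\<And>n. measure (\<mu> n) {a<..b} = 1"
  shows "tight \<mu>"
  unfolding tight_def using assms by force

lemma Re_Cayley_pos:
  fixes w :: complex assumes "norm w < 1"
  shows "Re ((1 + w) / (1 - w)) > 0"
proof -
  have "1 - w \<noteq> 0" using assms by auto
  then have "(1 + w) / (1 - w) = 2 * (1 / (1 - w)) - 1" by (simp add: field_simps)
  moreover have "Re (2 * u - 1) = 2 * Re u - 1" for u :: complex by simp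
  ultimately show ?thesis using Re_inverse_one_minus_gt_half[OF assms] by (simp only:)
qed

lemma tendsto_integral_ucirc_kernel:
  assumes "\<And>n. real_distribution (\<mu> n)" "real_distribution M" "weak_conv_m \<mu> M" and z: "norm z < 1"
  shows "(\<lambda>n. integral\<^sup>L (\<mu> n) (\<lambda>t. z / (ucirc t - z))) \<longlonglongrightarrow> integral\<^sup>L M (\<lambda>t. z / (ucirc t - z))"
proof (rule weak_conv_imp_integral_bdd_continuous_conv[where B = "norm z / (1 - norm z)"])
  show "isCont (\<lambda>t. z / (ucirc t - z)) t" for t
    using ucirc_minus_nonzero[OF z] continuous_on_ucirc
    by (intro continuous_intros) (auto simp: continuous_on_eq_continuous_at)
  show "norm (z / (ucirc t - z)) \<le> norm z / (1 - norm z)" for t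
    using norm_triangle_ineq2[of "ucirc t" z] z unfolding norm_divide
    by (intro divide_left_mono mult_pos_pos) auto
qed (use assms in auto)

text \<open>Herglotz representation, in the form of the kernel \<open>z/(\<zeta> - z) = ((\<zeta> + z)/(\<zeta> - z) - 1)/2\<close>:
  the measures representing the dilations \<open>F(s z)\<close>, \<open>s \<rightarrow> 1\<close>, all live on \<open>[0,1]\<close>, so a
  subsequence converges weakly, and its limit represents \<open>F\<close>.\<close>
lemma Herglotz_representation:
  assumes holF: "F holomorphic_on ball 0 1" and F0: "F 0 = 1"
    and Re_F: "\<And>z. norm z < 1 \<Longrightarrow> Re (F z) \<ge> 0"
  obtains M where "real_distribution M"
    "\<And>z. norm z < 1 \<Longrightarrow> integral\<^sup>L M (\<lambda>t. z / (ucirc t - z)) = (F z - 1) / 2"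
proof -
  define s where "s n = 1 - 1 / real (n + 2)" for n
  have s: "0 < s n" "s n < 1" for n by (auto simp: s_def field_simps)
  have "s \<longlonglongrightarrow> 1"
    using tendsto_diff[OF tendsto_const LIMSEQ_ignore_initial_segment[OF lim_1_over_n, of 2], of 1]
    by (simp add: s_def[abs_def])
  define G where "G n w = F (of_real (s n) * w)" for n w
  have in_disc: "norm (of_real (s n) * w) < 1" if "norm w < 1 / s n" for n and w :: complex
    using that s[of n] by (simp add: norm_mult field_simps)
  have holG: "G n holomorphic_on ball 0 (1 / s n)" for n
    unfolding G_def using in_disc
    by (intro holomorphic_on_compose_gen[OF _ holF, unfolded comp_def] holomorphic_intros) auto
  have R: "1 < 1 / s n" for n using s[of n] by (simp add: field_simps)
  have G0: "G n 0 = 1" for n by (simp add: G_def F0)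
  have Re_G: "Re (G n (ucirc t)) \<ge> 0" for n t
    using Re_F[OF in_disc] R[of n] by (simp add: G_def)
  note herglotz = real_distribution_herglotz_measure[OF holG R G0 Re_G]
    emeasure_herglotz_measure[OF holG R G0 Re_G]
    integral_herglotz_measure_kernel[OF holG R G0 Re_G]
  define \<nu> where "\<nu> n = herglotz_measure (G n)" for n
  have "{0..1} \<subseteq> {-1<..2::real}" by auto
  then have "tight \<nu>"
    using herglotz(1,2) by (intro tight_if_measure_Ioc_eq_1[where a = "-1" and b = 2])
      (auto simp: \<nu>_def measure_def)
  then obtain r M where r: "strict_mono r" and M: "real_distribution M" and conv: "weak_conv_m (\<nu> \<circ> r) M"
    using tight_imp_convergent_subsubsequence[of \<nu> id] by (auto simp: strict_mono_def)
  have "integral\<^sup>L M (\<lambda>t. z / (ucirc t - z)) = (F z - 1) / 2" if z: "norm z < 1" for z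
  proof (rule LIMSEQ_unique)
    show "(\<lambda>n. (F (of_real (s (r n)) * z) - 1) / 2) \<longlonglongrightarrow> integral\<^sup>L M (\<lambda>t. z / (ucirc t - z))"
      using tendsto_integral_ucirc_kernel[OF _ M conv z] herglotz(1)
      by (simp add: \<nu>_def herglotz(3)[OF z] G_def)
    have "isCont F z"
      using holomorphic_on_imp_continuous_on[OF holF] z by (simp add: continuous_on_eq_continuous_at)
    moreover have "(\<lambda>n. of_real (s (r n)) * z) \<longlonglongrightarrow> z"
      using LIMSEQ_subseq_LIMSEQ[OF \<open>s \<longlonglongrightarrow> 1\<close> r] by (auto intro!: tendsto_eq_intros simp: comp_def)
    ultimately show "(\<lambda>n. (F (of_real (s (r n)) * z) - 1) / 2) \<longlonglongrightarrow> (F z - 1) / 2"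
      by (intro tendsto_intros isCont_tendsto_compose[of z F]) auto
  qed
  with M show ?thesis using that by blast
qed

text \<open>Apply Herglotz to the Cayley transform \<open>F = (1 + \<phi>)/(1 - \<phi>)\<close> and push the measure to the
  circle by \<open>t \<mapsto> cnj (ucirc t)\<close>, so that \<open>\<psi> = (F - 1)/2 = \<phi>/(1 - \<phi>)\<close>.\<close>
lemma eta_of_self_map_of_disc:
  assumes hol: "\<phi> holomorphic_on ball 0 1" and \<phi>0: "\<phi> 0 = 0"
    and lt1: "\<And>z. norm z < 1 \<Longrightarrow> norm (\<phi> z) < 1"
  obtains \<rho> where "\<rho> \<in> PT" "\<And>z. norm z < 1 \<Longrightarrow> eta \<rho> z = \<phi> z"
proof -
  define F where "F z = (1 + \<phi> z) / (1 - \<phi> z)" for z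
  have \<phi>_ne_1: "1 - \<phi> z \<noteq> 0" if "norm z < 1" for z
    using lt1[OF that] by auto
  have "F holomorphic_on ball 0 1"
    unfolding F_def using hol \<phi>_ne_1 by (intro holomorphic_intros) auto
  moreover have "Re (F z) \<ge> 0" if "norm z < 1" for z
    using Re_Cayley_pos[OF lt1[OF that]] by (simp add: F_def)
  ultimately obtain M where M: "real_distribution M"
    and repr: "\<And>z. norm z < 1 \<Longrightarrow> integral\<^sup>L M (\<lambda>t. z / (ucirc t - z)) = (F z - 1) / 2"
    using Herglotz_representation[of F] by (auto simp: F_def \<phi>0)
  define \<rho> where "\<rho> = distr M borel (\<lambda>t. cnj (ucirc t))"
  have "eta \<rho> z = \<phi> z" if z: "norm z < 1" for z
  proof -
    have "psi \<rho> z = (F z - 1) / 2"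
      unfolding \<rho>_def psi_distr_cnj_ucirc[OF M z] repr[OF z] ..
    also have "\<dots> = \<phi> z / (1 - \<phi> z)"
      using \<phi>_ne_1[OF z] by (simp add: F_def field_simps)
    moreover have "1 + \<phi> z / (1 - \<phi> z) = 1 / (1 - \<phi> z)"
      using \<phi>_ne_1[OF z] by (simp add: field_simps)
    ultimately show ?thesis
      using \<phi>_ne_1[OF z] by (simp add: eta_def)
  qed
  moreover have "\<rho> \<in> PT" unfolding \<rho>_def by (rule distr_cnj_ucirc_PT[OF M])
  ultimately show ?thesis using that by blast
qed


section \<open>Factorisation of \<open>h\<^sub>\<mu>\<close> along a \<open>\<rhd>\<^sub>c\<close>-root\<close>

lemma cm_pow_eq: "cm_pow f g n = ((\<lambda>z. z * (\<Prod>k<n. hfun f ((g ^^ k) z))), g ^^ n)"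
  by (induction n) (simp_all add: cm_step_def mult.assoc comp_def)

lemma cm_pow_diag:
  assumes f0: "f 0 = 0"
  shows "cm_pow f f n = (f ^^ n, f ^^ n)"
proof -
  have "z * (\<Prod>k<n. hfun f ((f ^^ k) z)) = (f ^^ n) z" for z
  proof (induction n)
    case (Suc n)
    then show ?case using hfun_mult_eq[of f "(f ^^ n) z", OF f0] by (simp add: mult.assoc[symmetric])
  qed simp
  then show ?thesis by (simp add: cm_pow_eq fun_eq_iff)
qed

lemma funpow_disc_contraction:
  fixes g :: "'a::real_normed_vector \<Rightarrow> 'a"
  assumes g0: "g 0 = 0" and le: "\<And>z. norm z < 1 \<Longrightarrow> norm (g z) \<le> norm z"
  shows "(g ^^ k) 0 = 0" "norm z < 1 \<Longrightarrow> norm ((g ^^ k) z) \<le> norm z"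
proof -
  show "(g ^^ k) 0 = 0" using g0 by (induction k) auto
  show "norm ((g ^^ k) z) \<le> norm z" if "norm z < 1"
  proof (induction k)
    case (Suc k)
    then show ?case using le[of "(g ^^ k) z"] that by simp
  qed simp
qed

lemma funpow_image_subset: "g ` S \<subseteq> S \<Longrightarrow> (g ^^ k) ` S \<subseteq> S"
  by (induction k) auto

lemma continuous_on_funpow:
  assumes "continuous_on S g" "g ` S \<subseteq> S"
  shows "continuous_on S (g ^^ k)"
proof (induction k)
  case (Suc k)
  then show ?case
    using continuous_on_compose2[OF assms(1) Suc funpow_image_subset[OF assms(2)]] by simp
qed (simp add: continuous_on_id)

lemma hfun_eq_of_mult_eq:
  assumes holf: "f holomorphic_on ball 0 1" and f0: "f 0 = 0" and contP: "isCont P 0"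
    and eq: "\<And>z. norm z < 1 \<Longrightarrow> f z = z * P z" and z: "norm z < 1"
  shows "hfun f z = P z"
proof -
  have off_0: "hfun f w = P w" if "norm w < 1" "w \<noteq> 0" for w
    using eq[OF that(1)] that(2) by (simp add: hfun_def)
  have "isCont (hfun f) 0"
    using holomorphic_on_imp_continuous_on[OF holomorphic_on_hfun[OF holf f0]]
    by (simp add: continuous_on_eq_continuous_at)
  moreover have "eventually (\<lambda>w. hfun f w = P w) (at 0)"
    unfolding eventually_at by (intro exI[of _ 1]) (auto intro: off_0 simp: dist_norm)
  ultimately have "(P \<longlongrightarrow> hfun f 0) (at 0)"
    unfolding isCont_def by (rule Lim_transform_eventually)
  then have "hfun f 0 = P 0"
    using contP unfolding isCont_def by (rule tendsto_unique[OF at_neq_bot])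
  with off_0 z show ?thesis by (cases "z = 0") auto
qed

definition disc_factorization :: "(complex \<Rightarrow> complex) \<Rightarrow> nat \<Rightarrow> bool" where
  "disc_factorization H n \<longleftrightarrow> (\<exists>h g. h holomorphic_on ball 0 1 \<and> (\<forall>w. norm w < 1 \<longrightarrow> norm (h w) \<le> 1)
     \<and> g 0 = 0 \<and> (\<forall>w. norm w < 1 \<longrightarrow> norm (g w) \<le> norm w)
     \<and> (\<forall>z. norm z < 1 \<longrightarrow> H z = (\<Prod>k<n. h ((g ^^ k) z))))"

lemma disc_factorization_hfun_eta:
  assumes M: "M \<in> PT" and M1: "M1 \<in> PT" and N1: "N1 \<in> PT"
    and eq: "\<forall>z\<in>ball 0 1. eta M z = fst (cm_pow (eta M1) (eta N1) n) z"
  shows "disc_factorization (hfun (eta M)) n"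
proof -
  define P where "P z = (\<Prod>k<n. hfun (eta M1) ((eta N1 ^^ k) z))" for z
  have maps: "eta N1 ` ball 0 1 \<subseteq> ball 0 1" using norm_eta_lt_1[OF N1] by auto
  have "continuous_on (ball 0 1) (\<lambda>z. hfun (eta M1) ((eta N1 ^^ k) z))" for k
    by (rule continuous_on_compose2[OF holomorphic_on_imp_continuous_on[OF holomorphic_on_hfun_eta[OF M1]]
        continuous_on_funpow[OF holomorphic_on_imp_continuous_on[OF holomorphic_on_eta[OF N1]] maps]
        funpow_image_subset[OF maps]])
  then have "continuous_on (ball 0 1) P"
    unfolding P_def by (intro continuous_on_prod) auto
  then have contP: "isCont P 0" by (simp add: continuous_on_eq_continuous_at)
  have "hfun (eta M) z = P z" if "norm z < 1" for z
  proof (rule hfun_eq_of_mult_eq[OF holomorphic_on_eta[OF M] eta_0 contP _ that])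
    show "eta M w = w * P w" if "norm w < 1" for w
      using eq that by (simp add: cm_pow_eq P_def)
  qed
  then show ?thesis
    unfolding disc_factorization_def P_def
    using holomorphic_on_hfun_eta[OF M1] norm_hfun_eta_le_1[OF M1] norm_eta_le[OF N1]
    by (intro exI[of _ "hfun (eta M1)"] exI[of _ "eta N1"]) auto
qed

lemma norm_le_power_if_disc_factorization:
  assumes "disc_factorization H n" "H 0 = 0" "norm z < 1"
  shows "norm (H z) \<le> norm z ^ n"
proof -
  obtain h g where h: "h holomorphic_on ball 0 1" "\<And>w. norm w < 1 \<Longrightarrow> norm (h w) \<le> 1"
    and g: "g 0 = 0" "\<And>w. norm w < 1 \<Longrightarrow> norm (g w) \<le> norm w"
    and H: "\<And>z. norm z < 1 \<Longrightarrow> H z = (\<Prod>k<n. h ((g ^^ k) z))"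
    using assms(1) unfolding disc_factorization_def by blast
  have "h 0 ^ n = 0" using H[of 0] assms(2) funpow_disc_contraction(1)[OF g] by simp
  then have Schwarz: "norm (h w) \<le> norm w" if "norm w < 1" for w
    using Schwarz_Lemma_le[OF h(1) _ h(2) that] by simp
  have "norm (H z) = (\<Prod>k<n. norm (h ((g ^^ k) z)))" using H assms(3) by (simp add: prod_norm)
  also have "\<dots> \<le> (\<Prod>k<n. norm z)"
  proof (rule prod_mono)
    fix k
    have "norm ((g ^^ k) z) \<le> norm z" by (rule funpow_disc_contraction(2)[OF g assms(3)])
    then show "0 \<le> norm (h ((g ^^ k) z)) \<and> norm (h ((g ^^ k) z)) \<le> norm z"
      using Schwarz[of "(g ^^ k) z"] assms(3) by simp
  qed
  finally show ?thesis by simp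
qed

lemma norm_0_le_power_if_disc_factorization:
  assumes "disc_factorization H n" "H z = 0" "norm z < 1"
  shows "norm (H 0) \<le> norm z ^ n"
proof -
  obtain h g where h: "h holomorphic_on ball 0 1" "\<And>w. norm w < 1 \<Longrightarrow> norm (h w) \<le> 1"
    and g: "g 0 = 0" "\<And>w. norm w < 1 \<Longrightarrow> norm (g w) \<le> norm w"
    and H: "\<And>z. norm z < 1 \<Longrightarrow> H z = (\<Prod>k<n. h ((g ^^ k) z))"
    using assms(1) unfolding disc_factorization_def by blast
  obtain k where "h ((g ^^ k) z) = 0" using H[OF assms(3)] assms(2) by auto
  moreover have "norm ((g ^^ k) z) \<le> norm z" using funpow_disc_contraction(2)[OF g assms(3)] .
  ultimately have "norm (h 0) \<le> norm z"
    using norm_at_0_le_norm_of_zero[OF h, of "(g ^^ k) z"] assms(3) by simp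
  then have "norm (h 0) ^ n \<le> norm z ^ n" by (simp add: power_mono)
  then show ?thesis using H[of 0] funpow_disc_contraction(1)[OF g] by (simp add: norm_power)
qed

lemma le_powers_imp_nonpos:
  fixes x r :: real
  assumes "0 \<le> r" "r < 1" "\<And>n. n \<ge> 2 \<Longrightarrow> x \<le> r ^ n"
  shows "x \<le> 0"
proof (rule tendsto_lowerbound[OF LIMSEQ_power_zero[of r]])
  show "eventually (\<lambda>n. x \<le> r ^ n) sequentially"
    using assms(3) by (auto simp: eventually_sequentially)
qed (use assms in auto)

lemma disc_factorization_zero_imp_zero:
  assumes fac: "\<And>n. n \<ge> 2 \<Longrightarrow> disc_factorization H n"
    and w: "norm w < 1" "H w = 0" and z: "norm z < 1"
  shows "H z = 0"
proof -
  have "norm (H 0) \<le> 0"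
    using w norm_0_le_power_if_disc_factorization[OF fac w(2,1)] by (intro le_powers_imp_nonpos) auto
  then have "norm (H z) \<le> 0"
    using z norm_le_power_if_disc_factorization[OF fac _ z] by (intro le_powers_imp_nonpos) auto
  then show ?thesis by simp
qed

section \<open>Infinite divisibility\<close>

lemma eta_eq_boolean_power_if_hfun_nonzero:
  assumes M: "M \<in> PT" and nz: "\<And>z. norm z < 1 \<Longrightarrow> hfun (eta M) z \<noteq> 0" and n: "n > 0"
  obtains \<rho> where "\<rho> \<in> PT" "\<And>z. norm z < 1 \<Longrightarrow> eta M z = eta \<rho> z ^ n / z ^ (n - 1)"
proof -
  obtain K where holK: "K holomorphic_on ball 0 1" and K: "\<And>z. norm z < 1 \<Longrightarrow> K z ^ n = hfun (eta M) z"
    using holomorphic_nth_root_ball[OF holomorphic_on_hfun_eta[OF M] nz n] by blast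
  have K_le: "norm (K z) \<le> 1" if "norm z < 1" for z
  proof -
    have "norm (K z) ^ n \<le> 1" using norm_hfun_eta_le_1[OF M that] K[OF that] by (simp add: norm_power[symmetric])
    then show ?thesis using n by (simp add: power_le_one_iff)
  qed
  have "(\<lambda>z. z * K z) holomorphic_on ball 0 1" using holK by (intro holomorphic_intros)
  moreover have "norm (z * K z) < 1" if "norm z < 1" for z
  proof -
    have "norm z * norm (K z) \<le> norm z" using K_le[OF that] by (simp add: mult_left_le)
    then show ?thesis using that by (simp add: norm_mult)
  qed
  ultimately obtain \<rho> where \<rho>: "\<rho> \<in> PT" "\<And>z. norm z < 1 \<Longrightarrow> eta \<rho> z = z * K z"
    using eta_of_self_map_of_disc[of "\<lambda>z. z * K z"] by auto
  obtain m where m: "n = Suc m" using n gr0_implies_Suc by blast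
  have "eta M z = eta \<rho> z ^ n / z ^ (n - 1)" if z: "norm z < 1" for z
  proof (cases "z = 0")
    case False
    have "eta \<rho> z ^ n / z ^ (n - 1) = z * z ^ m * K z ^ n / z ^ m"
      by (simp add: \<rho>(2)[OF z] power_mult_distrib m)
    also have "\<dots> = z * hfun (eta M) z" using False K[OF z] by simp
    finally show ?thesis using hfun_mult_eq[of "eta M" z] by simp
  qed (use n in simp)
  with \<rho>(1) show ?thesis using that by blast
qed

lemma ID_cm_imp_ID_boolean:
  assumes M: "M \<in> PT" and ID: "ID_cm M N"
  shows "M \<in> ID_boolean"
proof -
  have fac: "disc_factorization (hfun (eta M)) n" if "n \<ge> 2" for n
  proof -
    obtain M1 N1 where "M1 \<in> PT" "N1 \<in> PT" "\<forall>z\<in>ball 0 1. eta M z = fst (cm_pow (eta M1) (eta N1) n) z"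
      using ID \<open>n \<ge> 2\<close> unfolding ID_cm_def by blast
    then show ?thesis by (intro disc_factorization_hfun_eta[OF M])
  qed
  have "\<exists>\<rho>\<in>PT. \<forall>z\<in>ball 0 1. eta M z = eta \<rho> z ^ n / z ^ (n - 1)" if n: "n \<ge> 2" for n
  proof (cases "\<exists>w. norm w < 1 \<and> hfun (eta M) w = 0")
    case True
    then obtain w where w: "norm w < 1" "hfun (eta M) w = 0" by blast
    have "eta M z = 0" if "norm z < 1" for z
      using disc_factorization_zero_imp_zero[OF fac w that] hfun_mult_eq[of "eta M" z] by simp
    then show ?thesis using M n by (intro bexI[of _ M]) auto
  next
    case False
    then obtain \<rho> where "\<rho> \<in> PT" "\<And>z. norm z < 1 \<Longrightarrow> eta M z = eta \<rho> z ^ n / z ^ (n - 1)"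
      using eta_eq_boolean_power_if_hfun_nonzero[OF M, of n] n by auto
    then show ?thesis by auto
  qed
  with M show ?thesis unfolding ID_boolean_def by blast
qed

lemma ID_cm_diag_snd:
  assumes "ID_cm M N"
  shows "ID_cm N N"
  unfolding ID_cm_def
proof (intro allI impI)
  fix n :: nat assume "2 \<le> n"
  then obtain M1 N1 where "N1 \<in> PT" "\<forall>z\<in>ball 0 1. eta N z = snd (cm_pow (eta M1) (eta N1) n) z"
    using assms unfolding ID_cm_def by blast
  moreover have "snd (cm_pow (eta M1) (eta N1) n) = eta N1 ^^ n" by (simp add: cm_pow_eq)
  ultimately show "\<exists>\<mu>1\<in>PT. \<exists>\<nu>1\<in>PT. \<forall>z\<in>ball 0 1. eta N z = fst (cm_pow (eta \<mu>1) (eta \<nu>1) n) z \<and>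
      eta N z = snd (cm_pow (eta \<mu>1) (eta \<nu>1) n) z"
    by (intro bexI[of _ N1]) (auto simp: cm_pow_diag[where f = "eta N1", OF eta_0])
qed

lemma ID_monotone_imp_ID_cm_diag:
  assumes "M \<in> ID_monotone"
  shows "ID_cm M M"
  unfolding ID_cm_def
proof (intro allI impI)
  fix n :: nat assume "2 \<le> n"
  then obtain R where "R \<in> PT" "\<forall>z\<in>ball 0 1. eta M z = (eta R ^^ n) z"
    using assms unfolding ID_monotone_def by blast
  then show "\<exists>\<mu>1\<in>PT. \<exists>\<nu>1\<in>PT. \<forall>z\<in>ball 0 1. eta M z = fst (cm_pow (eta \<mu>1) (eta \<nu>1) n) z \<and>
      eta M z = snd (cm_pow (eta \<mu>1) (eta \<nu>1) n) z"
    by (intro bexI[of _ R]) (auto simp: cm_pow_diag[where f = "eta R", OF eta_0])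
qed

theorem theorem5p12:
  shows "(\<forall>\<mu> \<in> PT. \<forall>\<nu> \<in> PT. ID_cm \<mu> \<nu> \<longrightarrow> \<mu> \<in> ID_boolean \<and> \<nu> \<in> ID_boolean)
         \<and> ID_monotone \<subseteq> ID_boolean"
proof
  show "\<forall>\<mu> \<in> PT. \<forall>\<nu> \<in> PT. ID_cm \<mu> \<nu> \<longrightarrow> \<mu> \<in> ID_boolean \<and> \<nu> \<in> ID_boolean"
    using ID_cm_imp_ID_boolean ID_cm_diag_snd by blast
  show "ID_monotone \<subseteq> ID_boolean"
    using ID_cm_imp_ID_boolean ID_monotone_imp_ID_cm_diag by (auto simp: ID_monotone_def)
qed

end
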